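(* The pseudovariety $\mathbf{RZ}\mathbin{ⓜ}\mathbf{LNB}$, where $\mathbf{LNB}=\mathbf{Sl}\vee\mathbf{LZ}$, is generated by $L_2^{\mathsf{bar}}$.
   Context: A pseudovariety is a class of finite semigroups closed under finite direct products, subsemigroups and homomorphic images. $\mathbf{Sl}$, $\mathbf{LZ}$, $\mathbf{RZ}$ are the pseudovarieties of semilattices, left zero semigroups ($xy=x$) and right zero semigroups ($xy=y$). The Mal'cev product $\mathbf{V}\mathbin{ⓜ}\mathbf{W}$ is the pseudovariety generated by all finite semigroups $S$ admitting a homomorphism $\varphi\colon S\to T$ with $T\in\mathbf{W}$ and $e\varphi^{-1}\in\mathbf{V}$ for every idempotent $e\in T$. $L_2=\{e,f\}$ is the left zero semigroup of order two and $L_2^{\mathsf{bar}}=\{e,f,\bar e,\bar f,\bar I\}$ is the semigroup with multiplication: $xy=y$ for $y\in\{\bar e,\bar f,\bar I\}$; $ee=ef=e$; $fe=ff=f$; $\bar ee=\bar ef=\bar e$; $\bar fe=\bar ff=\bar f$; $\bar Ie=\bar e$; $\bar If=\bar f$. *)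

theory Defs
  imports Main "HOL-Library.Nat_Bijection"
begin

text \<open>Finite semigroups are represented concretely: a carrier set of naturals together
  with a binary operation. Every finite semigroup is isomorphic to one of this form, and
  all classes considered below are closed under isomorphism.\<close>

type_synonym fsg = "nat set \<times> (nat \<Rightarrow> nat \<Rightarrow> nat)"

definition is_fsg :: "fsg \<Rightarrow> bool" where
  "is_fsg S \<longleftrightarrow> (case S of (A, m) \<Rightarrow>
     finite A \<and> A \<noteq> {} \<and> (\<forall>x\<in>A. \<forall>y\<in>A. m x y \<in> A) \<and>
     (\<forall>x\<in>A. \<forall>y\<in>A. \<forall>z\<in>A. m (m x y) z = m x (m y z)))"

definition sg_hom :: "(nat \<Rightarrow> nat) \<Rightarrow> fsg \<Rightarrow> fsg \<Rightarrow> bool" where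
  "sg_hom h S T \<longleftrightarrow> (case S of (A, m) \<Rightarrow> case T of (B, n) \<Rightarrow>
     h ` A \<subseteq> B \<and> (\<forall>x\<in>A. \<forall>y\<in>A. h (m x y) = n (h x) (h y)))"

definition sg_prod :: "fsg \<Rightarrow> fsg \<Rightarrow> fsg" where
  "sg_prod S T = (case S of (A, m) \<Rightarrow> case T of (B, n) \<Rightarrow>
     (prod_encode ` (A \<times> B),
      \<lambda>u v. prod_encode (m (fst (prod_decode u)) (fst (prod_decode v)),
                          n (snd (prod_decode u)) (snd (prod_decode v)))))"

definition pseudovariety :: "fsg set \<Rightarrow> bool" where
  "pseudovariety V \<longleftrightarrow>
     (\<forall>S\<in>V. is_fsg S) \<and>
     ({0}, \<lambda>_ _. 0) \<in> V \<and>
     (\<forall>S\<in>V. \<forall>T\<in>V. sg_prod S T \<in> V) \<and>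
     (\<forall>A m B. (A, m) \<in> V \<longrightarrow> B \<subseteq> A \<longrightarrow> B \<noteq> {} \<longrightarrow>
              (\<forall>x\<in>B. \<forall>y\<in>B. m x y \<in> B) \<longrightarrow> (B, m) \<in> V) \<and>
     (\<forall>S\<in>V. \<forall>T h. is_fsg T \<longrightarrow> sg_hom h S T \<longrightarrow> h ` fst S = fst T \<longrightarrow> T \<in> V)"

definition pv_gen :: "fsg set \<Rightarrow> fsg set" where
  "pv_gen C = {S. \<forall>V. pseudovariety V \<longrightarrow> C \<subseteq> V \<longrightarrow> S \<in> V}"

definition pv_join :: "fsg set \<Rightarrow> fsg set \<Rightarrow> fsg set" where
  "pv_join V W = pv_gen (V \<union> W)"

definition Sl :: "fsg set" where
  "Sl = {(A, m). is_fsg (A, m) \<and> (\<forall>x\<in>A. m x x = x) \<and> (\<forall>x\<in>A. \<forall>y\<in>A. m x y = m y x)}"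

definition LZ :: "fsg set" where
  "LZ = {(A, m). is_fsg (A, m) \<and> (\<forall>x\<in>A. \<forall>y\<in>A. m x y = x)}"

definition RZ :: "fsg set" where
  "RZ = {(A, m). is_fsg (A, m) \<and> (\<forall>x\<in>A. \<forall>y\<in>A. m x y = y)}"

definition LNB :: "fsg set" where
  "LNB = pv_join Sl LZ"

definition malcev :: "fsg set \<Rightarrow> fsg set \<Rightarrow> fsg set" where
  "malcev V W = pv_gen {S. is_fsg S \<and> (\<exists>T h. T \<in> W \<and> sg_hom h S T \<and> h ` fst S = fst T \<and>
      (\<forall>e\<in>fst T. snd T e e = e \<longrightarrow> ({x\<in>fst S. h x = e}, snd S) \<in> V))}"

text \<open>L2bar with e = 0, f = 1, ebar = 2, fbar = 3, Ibar = 4.\<close>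
definition L2bar :: fsg where
  "L2bar = ({0,1,2,3,4}, \<lambda>x y. if y \<ge> 2 then y else if x = 4 then y + 2 else x)"

end

theory Submission
  imports Defs "HOL-Library.FuncSet"
begin

text \<open>Collapsing the three barred elements of L2bar to a zero is a homomorphism onto L2 with a
  zero adjoined, a quotient of L2 times a two-element semilattice, with right zero fibres; so L2bar
  lies in the Mal'cev product of RZ and LNB. Conversely, let S map onto a member of LNB with right zero fibres. Every
  member of LNB satisfies xx = x and xyz = xzy, and from this one shows that in S the product of a
  word depends only on its first letter, on the letter y whose last occurrence is leftmost, and on
  the product of the suffix after that occurrence. Evaluations in L2bar detect exactly these data,
  so S satisfies every identity of L2bar and, being finite, is a quotient of a subsemigroup of a
  finite power of L2bar.\<close>

lemma is_fsg_pair: "is_fsg (A, m) \<longleftrightarrow> finite A \<and> A \<noteq> {} \<and> (\<forall>x\<in>A. \<forall>y\<in>A. m x y \<in> A) \<and>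
    (\<forall>x\<in>A. \<forall>y\<in>A. \<forall>z\<in>A. m (m x y) z = m x (m y z))"
  by (simp add: is_fsg_def)

lemma sg_prod_pair: "sg_prod (A, m) (B, n) = (prod_encode ` (A \<times> B),
    \<lambda>u v. prod_encode (m (fst (prod_decode u)) (fst (prod_decode v)),
                        n (snd (prod_decode u)) (snd (prod_decode v))))"
  by (simp add: sg_prod_def)

lemma sg_prod_op:
  "snd (sg_prod (A, m) (B, n)) (prod_encode (a, b)) (prod_encode (c, d)) = prod_encode (m a c, n b d)"
  by (simp add: sg_prod_def)

lemma is_fsg_prod: "is_fsg (A, m) \<Longrightarrow> is_fsg (B, n) \<Longrightarrow> is_fsg (sg_prod (A, m) (B, n))"
  unfolding is_fsg_pair sg_prod_pair by auto

lemma is_fsg_subsemigroup: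
  assumes "is_fsg (A, m)" "B \<subseteq> A" "B \<noteq> {}" "\<forall>x\<in>B. \<forall>y\<in>B. m x y \<in> B"
  shows "is_fsg (B, m)"
  using assms finite_subset[OF assms(2)] by (simp add: is_fsg_def subset_iff)

lemma sg_hom_iff: "sg_hom h S T \<longleftrightarrow>
    h ` fst S \<subseteq> fst T \<and> (\<forall>x\<in>fst S. \<forall>y\<in>fst S. h (snd S x y) = snd T (h x) (h y))"
  by (cases S, cases T) (simp add: sg_hom_def)

lemma pseudovariety_is_fsg: "pseudovariety V \<Longrightarrow> S \<in> V \<Longrightarrow> is_fsg S"
  by (simp add: pseudovariety_def)

lemma pseudovariety_trivial: "pseudovariety V \<Longrightarrow> ({0}, \<lambda>_ _. 0) \<in> V"
  by (simp add: pseudovariety_def)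

lemma pseudovariety_prod: "pseudovariety V \<Longrightarrow> S \<in> V \<Longrightarrow> T \<in> V \<Longrightarrow> sg_prod S T \<in> V"
  by (simp add: pseudovariety_def)

lemma pseudovariety_subsemigroup:
  assumes "pseudovariety V" "(A, m) \<in> V" "B \<subseteq> A" "B \<noteq> {}"
    "\<And>x y. x \<in> B \<Longrightarrow> y \<in> B \<Longrightarrow> m x y \<in> B"
  shows "(B, m) \<in> V"
proof -
  have "\<forall>A m B. (A, m) \<in> V \<longrightarrow> B \<subseteq> A \<longrightarrow> B \<noteq> {} \<longrightarrow>
      (\<forall>x\<in>B. \<forall>y\<in>B. m x y \<in> B) \<longrightarrow> (B, m) \<in> V"
    using assms(1) unfolding pseudovariety_def by (elim conjE)
  then show ?thesis
    using assms(2-5) by simp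
qed

lemma pseudovariety_hom_image:
  assumes "pseudovariety V" "S \<in> V" "is_fsg T" "sg_hom h S T" "h ` fst S = fst T"
  shows "T \<in> V"
proof -
  have "\<forall>S\<in>V. \<forall>T h. is_fsg T \<longrightarrow> sg_hom h S T \<longrightarrow> h ` fst S = fst T \<longrightarrow> T \<in> V"
    using assms(1) unfolding pseudovariety_def by (elim conjE)
  then show ?thesis
    using assms(2-5) by blast
qed

lemma pv_gen_eqI:
  assumes "\<And>V. pseudovariety V \<Longrightarrow> D \<subseteq> V \<Longrightarrow> C \<subseteq> V" and "D \<subseteq> C"
  shows "pv_gen C = pv_gen D"
  unfolding pv_gen_def by (rule Collect_cong) (use assms in blast)

lemma pv_gen_hom_image_prod:
  assumes "S \<in> C" "T \<in> C" "is_fsg R" "sg_hom g (sg_prod S T) R" "g ` fst (sg_prod S T) = fst R"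
  shows "R \<in> pv_gen C"
  unfolding pv_gen_def
proof (intro CollectI allI impI)
  fix V assume V: "pseudovariety V" and "C \<subseteq> V"
  then have "sg_prod S T \<in> V"
    using assms(1,2) pseudovariety_prod by blast
  then show "R \<in> V"
    using pseudovariety_hom_image[OF V _ assms(3-5)] by blast
qed

section \<open>Evaluation of words\<close>

text \<open>The empty word gets the junk value 0; only nonempty words are evaluated below.\<close>

fun word_eval :: "(nat \<Rightarrow> nat \<Rightarrow> nat) \<Rightarrow> (nat \<Rightarrow> nat) \<Rightarrow> nat list \<Rightarrow> nat" where
  "word_eval m \<sigma> [] = 0"
| "word_eval m \<sigma> [x] = \<sigma> x"
| "word_eval m \<sigma> (x # y # zs) = m (\<sigma> x) (word_eval m \<sigma> (y # zs))"

lemma word_eval_Cons: "u \<noteq> [] \<Longrightarrow> word_eval m \<sigma> (x # u) = m (\<sigma> x) (word_eval m \<sigma> u)"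
  by (cases u) auto

lemma word_eval_cong: "(\<And>x. x \<in> set u \<Longrightarrow> \<sigma> x = \<tau> x) \<Longrightarrow> word_eval m \<sigma> u = word_eval m \<tau> u"
  by (induction m \<sigma> u rule: word_eval.induct) auto

lemma word_eval_closed:
  assumes "\<And>x y. x \<in> C \<Longrightarrow> y \<in> C \<Longrightarrow> m x y \<in> C"
  shows "u \<noteq> [] \<Longrightarrow> \<sigma> ` set u \<subseteq> C \<Longrightarrow> word_eval m \<sigma> u \<in> C"
  by (induction u rule: list_nonempty_induct) (auto intro: assms simp: word_eval_Cons)

lemma word_eval_append:
  assumes closed: "\<And>x y. x \<in> C \<Longrightarrow> y \<in> C \<Longrightarrow> m x y \<in> C"
    and assoc: "\<And>x y z. x \<in> C \<Longrightarrow> y \<in> C \<Longrightarrow> z \<in> C \<Longrightarrow> m (m x y) z = m x (m y z)"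
  shows "u \<noteq> [] \<Longrightarrow> v \<noteq> [] \<Longrightarrow> \<sigma> ` set u \<subseteq> C \<Longrightarrow> \<sigma> ` set v \<subseteq> C \<Longrightarrow>
    word_eval m \<sigma> (u @ v) = m (word_eval m \<sigma> u) (word_eval m \<sigma> v)"
proof (induction u rule: list_nonempty_induct)
  case (cons x u)
  have "word_eval m \<sigma> ((x # u) @ v) = m (\<sigma> x) (m (word_eval m \<sigma> u) (word_eval m \<sigma> v))"
    using cons by (simp add: word_eval_Cons)
  also have "\<dots> = m (m (\<sigma> x) (word_eval m \<sigma> u)) (word_eval m \<sigma> v)"
    using cons.prems cons.hyps by (intro assoc[symmetric] word_eval_closed[OF closed]) auto
  finally show ?case
    using cons.hyps by (simp add: word_eval_Cons)
qed (simp add: word_eval_Cons)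

section \<open>Finite semigroups satisfying the identities of a member of a pseudovariety\<close>

fun sg_power :: "fsg \<Rightarrow> nat \<Rightarrow> fsg" where
  "sg_power L 0 = ({0}, \<lambda>_ _. 0)"
| "sg_power L (Suc k) = sg_prod L (sg_power L k)"

fun tuple_encode :: "nat list \<Rightarrow> nat" where
  "tuple_encode [] = 0"
| "tuple_encode (x # xs) = prod_encode (x, tuple_encode xs)"

lemma tuple_encode_inj:
  "length xs = length ys \<Longrightarrow> tuple_encode xs = tuple_encode ys \<Longrightarrow> xs = ys"
proof (induction xs arbitrary: ys)
  case (Cons x xs)
  then obtain y ys' where "ys = y # ys'"
    by (cases ys) auto
  then show ?case
    using Cons by (auto dest: inj_onD[OF inj_prod_encode, simplified])
qed simp

lemma fst_sg_power:
  "fst (sg_power (C, mul) k) = tuple_encode ` {xs. length xs = k \<and> set xs \<subseteq> C}"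
proof (induction k)
  case (Suc k)
  have "tuple_encode ` {xs. length xs = Suc k \<and> set xs \<subseteq> C} =
      prod_encode ` (C \<times> tuple_encode ` {xs. length xs = k \<and> set xs \<subseteq> C})"
    (is "?l = ?r")
  proof (rule equalityI)
    show "?l \<subseteq> ?r"
      by (auto simp: length_Suc_conv)
    show "?r \<subseteq> ?l"
    proof
      fix w assume "w \<in> ?r"
      then obtain x xs where "x \<in> C" "length xs = k" "set xs \<subseteq> C" "w = prod_encode (x, tuple_encode xs)"
        by blast
      then show "w \<in> ?l"
        by (intro image_eqI[of _ _ "x # xs"]) auto
    qed
  qed
  then show ?case
    using Suc by (cases "sg_power (C, mul) k") (simp add: sg_prod_pair)
qed auto

lemma snd_sg_power:
  "length xs = k \<Longrightarrow> length ys = k \<Longrightarrow>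
    snd (sg_power (C, mul) k) (tuple_encode xs) (tuple_encode ys) = tuple_encode (map2 mul xs ys)"
proof (induction k arbitrary: xs ys)
  case (Suc k)
  obtain x xs' y ys' where "xs = x # xs'" "ys = y # ys'"
    using Suc.prems by (auto simp: length_Suc_conv)
  then show ?case
    using Suc by (cases "sg_power (C, mul) k") (simp add: sg_prod_op del: sg_prod_def)
qed simp

lemma map2_map_map: "map2 f (map g xs) (map h xs) = map (\<lambda>x. f (g x) (h x)) xs"
  by (induction xs) auto

lemma pseudovariety_sg_power: "pseudovariety W \<Longrightarrow> L \<in> W \<Longrightarrow> sg_power L k \<in> W"
  by (induction k) (simp_all add: pseudovariety_trivial pseudovariety_prod)

lemma pseudovariety_quotient_of_words:
  assumes W: "pseudovariety W" and D: "(D, op) \<in> W" and S: "is_fsg (A, m)"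
    and vec_in: "\<And>u. u \<noteq> [] \<Longrightarrow> set u \<subseteq> A \<Longrightarrow> vec u \<in> D"
    and vec_append: "\<And>u v. u \<noteq> [] \<Longrightarrow> v \<noteq> [] \<Longrightarrow> set u \<subseteq> A \<Longrightarrow> set v \<subseteq> A \<Longrightarrow>
      vec (u @ v) = op (vec u) (vec v)"
    and vec_kernel: "\<And>u v. u \<noteq> [] \<Longrightarrow> v \<noteq> [] \<Longrightarrow> set u \<subseteq> A \<Longrightarrow> set v \<subseteq> A \<Longrightarrow>
      vec u = vec v \<Longrightarrow> word_eval m (\<lambda>x. x) u = word_eval m (\<lambda>x. x) v"
  shows "(A, m) \<in> W"
proof -
  define words where "words = {u. u \<noteq> [] \<and> set u \<subseteq> A}"
  have closed: "m x y \<in> A" and assoc: "m (m x y) z = m x (m y z)"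
    if "x \<in> A" "y \<in> A" "z \<in> A" for x y z
    using S that by (auto simp: is_fsg_def)
  have eval_in: "word_eval m (\<lambda>x. x) u \<in> A" if "u \<in> words" for u
    using that word_eval_closed[OF closed] by (auto simp: words_def)
  have append: "u @ v \<in> words" "vec (u @ v) = op (vec u) (vec v)"
    "word_eval m (\<lambda>x. x) (u @ v) = m (word_eval m (\<lambda>x. x) u) (word_eval m (\<lambda>x. x) v)"
    if "u \<in> words" "v \<in> words" for u v
    using that vec_append word_eval_append[OF closed assoc, where \<sigma> = "\<lambda>x. x"]
    by (simp_all add: words_def)
  have "(vec ` words, op) \<in> W"
  proof (rule pseudovariety_subsemigroup[OF W D])
    show "vec ` words \<subseteq> D"
      using vec_in by (auto simp: words_def)
    obtain a where "a \<in> A"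
      using S by (auto simp: is_fsg_def)
    then have "[a] \<in> words"
      by (simp add: words_def)
    then show "vec ` words \<noteq> {}"
      by blast
    fix x y assume "x \<in> vec ` words" "y \<in> vec ` words"
    then obtain u v where "u \<in> words" "v \<in> words" "x = vec u" "y = vec v"
      by blast
    then show "op x y \<in> vec ` words"
      using append(1,2) by (metis imageI)
  qed
  moreover define f where "f = (\<lambda>u. word_eval m (\<lambda>x. x) u) \<circ> inv_into words vec"
  have f_vec: "f (vec u) = word_eval m (\<lambda>x. x) u" if "u \<in> words" for u
  proof -
    have "inv_into words vec (vec u) \<in> words" "vec (inv_into words vec (vec u)) = vec u"
      using that by (simp_all add: inv_into_into f_inv_into_f)
    then show ?thesis
      using that vec_kernel by (simp add: f_def words_def)
  qed
  then have "sg_hom f (vec ` words, op) (A, m)"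
    using eval_in by (auto simp: sg_hom_def append(1,3) simp flip: append(2))
  moreover have "f ` vec ` words = A"
  proof -
    have "f ` vec ` words = (\<lambda>u. word_eval m (\<lambda>x. x) u) ` words"
      using f_vec by (simp add: image_image)
    moreover have "A \<subseteq> (\<lambda>u. word_eval m (\<lambda>x. x) u) ` words"
      by (force simp: words_def intro: image_eqI[where x = "[_]"])
    ultimately show ?thesis
      using eval_in by auto
  qed
  ultimately show ?thesis
    using pseudovariety_hom_image[OF W _ S] by (metis fst_conv)
qed

lemma pseudovariety_mem_if_identities:
  assumes W: "pseudovariety W" and L: "(C, mul) \<in> W" and S: "is_fsg (A, m)"
    and identities: "\<And>u v. u \<noteq> [] \<Longrightarrow> v \<noteq> [] \<Longrightarrow> set u \<subseteq> A \<Longrightarrow> set v \<subseteq> A \<Longrightarrow>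
      (\<forall>\<sigma>. \<sigma> ` A \<subseteq> C \<longrightarrow> word_eval mul \<sigma> u = word_eval mul \<sigma> v) \<Longrightarrow>
      word_eval m (\<lambda>x. x) u = word_eval m (\<lambda>x. x) v"
  shows "(A, m) \<in> W"
proof -
  have closed: "mul x y \<in> C" and assoc: "mul (mul x y) z = mul x (mul y z)"
    if "x \<in> C" "y \<in> C" "z \<in> C" for x y z
    using pseudovariety_is_fsg[OF W L] that by (auto simp: is_fsg_def)
  have "finite A" "finite C"
    using S pseudovariety_is_fsg[OF W L] by (simp_all add: is_fsg_def)
  then have "finite (A \<rightarrow>\<^sub>E C)"
    by (intro finite_PiE)
  then obtain ss where ss: "set ss = A \<rightarrow>\<^sub>E C"
    by (metis finite_list)
  define P where "P = sg_power (C, mul) (length ss)"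
  define vec where "vec u = tuple_encode (map (\<lambda>\<sigma>. word_eval mul \<sigma> u) ss)" for u
  have assignment: "\<sigma> ` set u \<subseteq> C" if "\<sigma> \<in> set ss" "set u \<subseteq> A" for \<sigma> u
    using that ss by (auto simp: PiE_iff)
  have restrict_eval: "word_eval mul (restrict \<sigma> A) u = word_eval mul \<sigma> u" if "set u \<subseteq> A" for \<sigma> u
    using that by (intro word_eval_cong) auto
  show ?thesis
  proof (rule pseudovariety_quotient_of_words[OF W _ S, of "fst P" "snd P" vec])
    show "(fst P, snd P) \<in> W"
      using pseudovariety_sg_power[OF W L] by (simp add: P_def)
    show "vec u \<in> fst P" if "u \<noteq> []" "set u \<subseteq> A" for u
    proof -
      have "word_eval mul \<sigma> u \<in> C" if "\<sigma> \<in> set ss" for \<sigma>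
        using word_eval_closed[OF closed \<open>u \<noteq> []\<close> assignment[OF that \<open>set u \<subseteq> A\<close>]] .
      then show ?thesis
        unfolding P_def vec_def fst_sg_power by (intro imageI) auto
    qed
    show "vec (u @ v) = snd P (vec u) (vec v)"
      if "u \<noteq> []" "v \<noteq> []" "set u \<subseteq> A" "set v \<subseteq> A" for u v
    proof -
      have "map (\<lambda>\<sigma>. word_eval mul \<sigma> (u @ v)) ss =
          map (\<lambda>\<sigma>. mul (word_eval mul \<sigma> u) (word_eval mul \<sigma> v)) ss"
        using that assignment by (intro map_cong refl word_eval_append[OF closed assoc]) auto
      then show ?thesis
        by (simp only: P_def vec_def snd_sg_power length_map map2_map_map)
    qed
    show "word_eval m (\<lambda>x. x) u = word_eval m (\<lambda>x. x) v"
      if "u \<noteq> []" "v \<noteq> []" "set u \<subseteq> A" "set v \<subseteq> A" "vec u = vec v" for u v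
    proof (rule identities[OF that(1-4)], intro allI impI)
      fix \<sigma> assume "\<sigma> ` A \<subseteq> C"
      then have "restrict \<sigma> A \<in> set ss"
        using ss by auto
      moreover have "map (\<lambda>\<tau>. word_eval mul \<tau> u) ss = map (\<lambda>\<tau>. word_eval mul \<tau> v) ss"
        using tuple_encode_inj[of "map (\<lambda>\<tau>. word_eval mul \<tau> u) ss" "map (\<lambda>\<tau>. word_eval mul \<tau> v) ss"] that(5)
        by (simp add: vec_def)
      ultimately show "word_eval mul \<sigma> u = word_eval mul \<sigma> v"
        using restrict_eval that(3,4) by (metis (no_types, lifting) map_eq_conv)
    qed
  qed
qed

section \<open>Left normal bands\<close>

definition left_normal_bands :: "fsg set" where
  "left_normal_bands = {S. is_fsg S \<and> (\<forall>x\<in>fst S. snd S x x = x) \<and>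
     (\<forall>x\<in>fst S. \<forall>y\<in>fst S. \<forall>z\<in>fst S. snd S (snd S x y) z = snd S (snd S x z) y)}"

lemma left_normal_bands_hom_image:
  assumes S: "(A, m) \<in> left_normal_bands" and T: "is_fsg (B, n)"
    and hom: "sg_hom h (A, m) (B, n)" and onto: "h ` A = B"
  shows "(B, n) \<in> left_normal_bands"
proof -
  have hom': "\<And>x y. x \<in> A \<Longrightarrow> y \<in> A \<Longrightarrow> h (m x y) = n (h x) (h y)"
    using hom by (simp add: sg_hom_def)
  have idem: "\<And>x. x \<in> A \<Longrightarrow> m x x = x"
    and left_normal: "\<And>x y z. x \<in> A \<Longrightarrow> y \<in> A \<Longrightarrow> z \<in> A \<Longrightarrow> m (m x y) z = m (m x z) y"
    and closed: "\<And>x y. x \<in> A \<Longrightarrow> y \<in> A \<Longrightarrow> m x y \<in> A"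
    using S by (auto simp: left_normal_bands_def is_fsg_def)
  have "n x x = x" if x: "x \<in> B" for x
  proof -
    obtain a where "a \<in> A" "x = h a"
      using x onto by blast
    then show ?thesis
      by (simp flip: hom' add: idem)
  qed
  moreover have "n (n x y) z = n (n x z) y" if xyz: "x \<in> B" "y \<in> B" "z \<in> B" for x y z
  proof -
    obtain a b c where abc: "a \<in> A" "b \<in> A" "c \<in> A" "x = h a" "y = h b" "z = h c"
      using xyz onto by blast
    then have "n (n x y) z = h (m (m a b) c)"
      by (simp add: hom' closed)
    also have "\<dots> = h (m (m a c) b)"
      using abc by (simp add: left_normal)
    also have "\<dots> = n (n x z) y"
      using abc by (simp add: hom' closed)
    finally show ?thesis .
  qed
  ultimately show ?thesis
    using T by (simp add: left_normal_bands_def)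
qed

lemma pseudovariety_left_normal_bands: "pseudovariety left_normal_bands"
  unfolding pseudovariety_def
proof (intro conjI allI ballI impI)
  show "({0}, \<lambda>_ _. 0) \<in> left_normal_bands"
    by (simp add: left_normal_bands_def is_fsg_def)
  show "sg_prod S T \<in> left_normal_bands" if "S \<in> left_normal_bands" "T \<in> left_normal_bands" for S T
    using that by (cases S, cases T) (simp add: left_normal_bands_def is_fsg_prod, simp add: sg_prod_pair)
  show "(B, m) \<in> left_normal_bands"
    if "(A, m) \<in> left_normal_bands" "B \<subseteq> A" "B \<noteq> {}" "\<forall>x\<in>B. \<forall>y\<in>B. m x y \<in> B" for A m B
    using that is_fsg_subsemigroup[of A m B] by (simp add: left_normal_bands_def subset_iff)
  show "T \<in> left_normal_bands"
    if "S \<in> left_normal_bands" "is_fsg T" "sg_hom h S T" "h ` fst S = fst T" for S T h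
    using that left_normal_bands_hom_image by (cases S, cases T) simp
qed (simp add: left_normal_bands_def)

lemma Sl_subset_left_normal_bands: "Sl \<subseteq> left_normal_bands"
proof
  fix S assume "S \<in> Sl"
  then obtain A m where SA: "S = (A, m)" and fsg: "is_fsg (A, m)" and idem: "\<forall>x\<in>A. m x x = x"
    and comm: "\<And>x y. x \<in> A \<Longrightarrow> y \<in> A \<Longrightarrow> m x y = m y x"
    by (auto simp: Sl_def)
  have "m (m x y) z = m (m x z) y" if "x \<in> A" "y \<in> A" "z \<in> A" for x y z
  proof -
    have "m (m x y) z = m x (m y z)"
      using fsg that by (simp add: is_fsg_def)
    also have "\<dots> = m x (m z y)"
      using that by (simp add: comm)
    also have "\<dots> = m (m x z) y"
      using fsg that by (simp add: is_fsg_def)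
    finally show ?thesis .
  qed
  then show "S \<in> left_normal_bands"
    using SA fsg idem by (simp add: left_normal_bands_def)
qed

lemma LZ_subset_left_normal_bands: "LZ \<subseteq> left_normal_bands"
  by (auto simp: LZ_def left_normal_bands_def is_fsg_def)

lemma LNB_subset_left_normal_bands: "LNB \<subseteq> left_normal_bands"
  unfolding LNB_def pv_join_def pv_gen_def
  using pseudovariety_left_normal_bands Sl_subset_left_normal_bands LZ_subset_left_normal_bands
  by blast

section \<open>Words evaluated in L2bar\<close>

definition L2bar_mult :: "nat \<Rightarrow> nat \<Rightarrow> nat" where
  "L2bar_mult x y = (if y \<ge> 2 then y else if x = 4 then y + 2 else x)"

lemma L2bar_eq: "L2bar = ({..4}, L2bar_mult)"
  unfolding L2bar_def L2bar_mult_def by (auto simp: fun_eq_iff)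

lemma L2bar_mult_assoc: "L2bar_mult (L2bar_mult x y) z = L2bar_mult x (L2bar_mult y z)"
  by (simp add: L2bar_mult_def)

lemma is_fsg_L2bar: "is_fsg L2bar"
  by (simp add: L2bar_eq is_fsg_def L2bar_mult_assoc) (simp add: L2bar_mult_def)

definition L2bar_equiv :: "nat list \<Rightarrow> nat list \<Rightarrow> bool" where
  "L2bar_equiv u v \<longleftrightarrow>
     (\<forall>\<sigma>. range \<sigma> \<subseteq> {..4} \<longrightarrow> word_eval L2bar_mult \<sigma> u = word_eval L2bar_mult \<sigma> v)"

lemma L2bar_equivD:
  "L2bar_equiv u v \<Longrightarrow> (\<And>x. \<sigma> x \<le> 4) \<Longrightarrow> word_eval L2bar_mult \<sigma> u = word_eval L2bar_mult \<sigma> v"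
  by (auto simp: L2bar_equiv_def)

lemma L2bar_equiv_sym: "L2bar_equiv u v \<Longrightarrow> L2bar_equiv v u"
  by (simp add: L2bar_equiv_def)

lemma word_eval_L2bar_append:
  "u \<noteq> [] \<Longrightarrow> v \<noteq> [] \<Longrightarrow>
    word_eval L2bar_mult \<sigma> (u @ v) = L2bar_mult (word_eval L2bar_mult \<sigma> u) (word_eval L2bar_mult \<sigma> v)"
  using word_eval_append[of UNIV L2bar_mult u v \<sigma>] L2bar_mult_assoc by simp

lemma word_eval_L2bar_append_bar:
  "u \<noteq> [] \<Longrightarrow> v \<noteq> [] \<Longrightarrow> word_eval L2bar_mult \<sigma> v \<ge> 2 \<Longrightarrow>
    word_eval L2bar_mult \<sigma> (u @ v) = word_eval L2bar_mult \<sigma> v"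
  by (simp add: word_eval_L2bar_append L2bar_mult_def)

lemma word_eval_L2bar_less_2_iff:
  "w \<noteq> [] \<Longrightarrow> word_eval L2bar_mult \<sigma> w < 2 \<longleftrightarrow> (\<forall>a\<in>set w. \<sigma> a < 2)"
  by (induction L2bar_mult \<sigma> w rule: word_eval.induct) (auto simp: L2bar_mult_def)

lemma word_eval_L2bar_hd:
  "w \<noteq> [] \<Longrightarrow> (\<forall>a\<in>set w. \<sigma> a < 2) \<Longrightarrow> word_eval L2bar_mult \<sigma> w = \<sigma> (hd w)"
  by (induction L2bar_mult \<sigma> w rule: word_eval.induct) (auto simp: L2bar_mult_def)

lemma word_eval_L2bar_eq_bar:
  assumes "c = 2 \<or> c = 3" "\<forall>a\<in>set w. \<sigma> a = 0 \<or> \<sigma> a = c" "\<exists>a\<in>set w. \<sigma> a = c"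
  shows "word_eval L2bar_mult \<sigma> w = c"
  using assms
proof (induction L2bar_mult \<sigma> w rule: word_eval.induct)
  case (3 \<sigma> x y zs)
  show ?case
  proof (cases "\<exists>a\<in>set (y # zs). \<sigma> a = c")
    case False
    then have "word_eval L2bar_mult \<sigma> (y # zs) = 0" and "\<sigma> x = c"
      using 3 word_eval_L2bar_hd[of "y # zs" \<sigma>] by auto
    then show ?thesis
      using 3 by (auto simp: L2bar_mult_def)
  qed (use 3 in \<open>auto simp: L2bar_mult_def\<close>)
qed auto

lemma word_eval_L2bar_last_Ibar: "\<sigma> y = 4 \<Longrightarrow> word_eval L2bar_mult \<sigma> (p @ [y]) = 4"
  by (cases "p = []") (auto simp: word_eval_L2bar_append L2bar_mult_def)

lemma L2bar_mult_Ibar_inj: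
  "L2bar_mult 4 a = L2bar_mult 4 b \<Longrightarrow> (a < 2 \<longleftrightarrow> b < 2) \<Longrightarrow> a = b"
  by (auto simp: L2bar_mult_def split: if_splits)

lemma L2bar_equiv_set_subset:
  assumes "u \<noteq> []" "v \<noteq> []" "L2bar_equiv u v"
  shows "set u \<subseteq> set v"
proof
  fix c assume c: "c \<in> set u"
  define \<sigma> where "\<sigma> x = (if x = c then 2 else 0 :: nat)" for x
  have "word_eval L2bar_mult \<sigma> u = word_eval L2bar_mult \<sigma> v"
    by (rule L2bar_equivD[OF assms(3)]) (simp add: \<sigma>_def)
  moreover have "\<not> word_eval L2bar_mult \<sigma> u < 2"
    using c assms(1) by (auto simp: word_eval_L2bar_less_2_iff \<sigma>_def)
  moreover have "word_eval L2bar_mult \<sigma> v < 2" if "c \<notin> set v"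
    using that assms(2) by (auto simp: word_eval_L2bar_less_2_iff \<sigma>_def)
  ultimately show "c \<in> set v"
    by auto
qed

lemma L2bar_equiv_set_eq: "u \<noteq> [] \<Longrightarrow> v \<noteq> [] \<Longrightarrow> L2bar_equiv u v \<Longrightarrow> set u = set v"
  by (meson L2bar_equiv_set_subset L2bar_equiv_sym subset_antisym)

lemma L2bar_equiv_hd_eq:
  assumes "u \<noteq> []" "v \<noteq> []" "L2bar_equiv u v"
  shows "hd u = hd v"
proof -
  define \<sigma> where "\<sigma> x = (if x = hd u then 0 else 1 :: nat)" for x
  have "word_eval L2bar_mult \<sigma> u = word_eval L2bar_mult \<sigma> v"
    by (rule L2bar_equivD[OF assms(3)]) (simp add: \<sigma>_def)
  moreover have "word_eval L2bar_mult \<sigma> w = \<sigma> (hd w)" if "w \<noteq> []" for w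
    using that by (intro word_eval_L2bar_hd) (auto simp: \<sigma>_def)
  ultimately show ?thesis
    using assms(1,2) by (simp add: \<sigma>_def split: if_splits)
qed

lemma split_at_leftmost_last_occurrence:
  "u \<noteq> [] \<Longrightarrow> \<exists>p y r. u = p @ [y] @ r \<and> y \<notin> set r \<and> set u = insert y (set r)"
proof (induction u rule: list_nonempty_induct)
  case (cons a u)
  then obtain p y r where "u = p @ [y] @ r" "y \<notin> set r" "set u = insert y (set r)"
    by blast
  then show ?case
    by (cases "a \<in> set u") (force intro: exI[of _ "a # p"], force intro: exI[of _ "[]"])
qed (intro exI[of _ "[]"]; simp)

text \<open>Assigning distinct bars to the two candidate letters separates the words otherwise.\<close>

lemma L2bar_equiv_split_letter_eq:
  assumes u: "u = p @ [y] @ r" "y \<notin> set r" "set u = insert y (set r)"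
    and v: "v = p' @ [y'] @ r'" "y' \<notin> set r'" "set v = insert y' (set r')"
    and equiv: "L2bar_equiv u v"
  shows "y = y'"
proof (rule ccontr)
  assume ne: "y \<noteq> y'"
  define \<sigma> where "\<sigma> x = (if x = y then 2 else if x = y' then 3 else 0 :: nat)" for x
  have "set u = set v"
    using u v equiv by (intro L2bar_equiv_set_eq) auto
  then have y'r: "y' \<in> set r" and yr': "y \<in> set r'"
    using ne u v by auto
  then have "r \<noteq> []" "r' \<noteq> []"
    by auto
  have "word_eval L2bar_mult \<sigma> r = 3" "word_eval L2bar_mult \<sigma> r' = 2"
    using u(2) v(2) y'r yr' ne by (auto intro!: word_eval_L2bar_eq_bar simp: \<sigma>_def)
  then have "word_eval L2bar_mult \<sigma> u = 3" "word_eval L2bar_mult \<sigma> v = 2"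
    using u(1) v(1) word_eval_L2bar_append_bar[of "p @ [y]" r \<sigma>]
      word_eval_L2bar_append_bar[of "p' @ [y']" r' \<sigma>] \<open>r \<noteq> []\<close> \<open>r' \<noteq> []\<close>
    by simp_all
  moreover have "word_eval L2bar_mult \<sigma> u = word_eval L2bar_mult \<sigma> v"
    by (rule L2bar_equivD[OF equiv]) (simp add: \<sigma>_def)
  ultimately show False
    by simp
qed

text \<open>Sending y to Ibar makes the prefix up to y evaluate to Ibar, and left multiplication by
  Ibar is injective on values of words with the same content.\<close>

lemma L2bar_equiv_suffix:
  assumes u: "u = p @ [y] @ r" "y \<notin> set r" and v: "v = p' @ [y] @ r'" "y \<notin> set r'"
    and r: "r \<noteq> []" "r' \<noteq> []" "set r = set r'" and equiv: "L2bar_equiv u v"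
  shows "L2bar_equiv r r'"
  unfolding L2bar_equiv_def
proof (intro allI impI)
  fix \<sigma> :: "nat \<Rightarrow> nat" assume range: "range \<sigma> \<subseteq> {..4}"
  let ?\<sigma>' = "\<sigma>(y := 4)"
  have "word_eval L2bar_mult ?\<sigma>' w = word_eval L2bar_mult \<sigma> w" if "y \<notin> set w" for w
    using that by (intro word_eval_cong) auto
  then have "word_eval L2bar_mult ?\<sigma>' u = L2bar_mult 4 (word_eval L2bar_mult \<sigma> r)"
    "word_eval L2bar_mult ?\<sigma>' v = L2bar_mult 4 (word_eval L2bar_mult \<sigma> r')"
    using u v r word_eval_L2bar_last_Ibar[of ?\<sigma>' y] word_eval_L2bar_append
    by (metis append_assoc append_is_Nil_conv fun_upd_same not_Cons_self2)+
  moreover have "word_eval L2bar_mult ?\<sigma>' u = word_eval L2bar_mult ?\<sigma>' v"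
    using range by (intro L2bar_equivD[OF equiv]) auto
  moreover have "word_eval L2bar_mult \<sigma> r < 2 \<longleftrightarrow> word_eval L2bar_mult \<sigma> r' < 2"
    using r word_eval_L2bar_less_2_iff by simp
  ultimately show "word_eval L2bar_mult \<sigma> r = word_eval L2bar_mult \<sigma> r'"
    using L2bar_mult_Ibar_inj by metis
qed

section \<open>Right zero extensions of left normal bands\<close>

locale rz_over_left_normal =
  fixes A :: "nat set" and m :: "nat \<Rightarrow> nat \<Rightarrow> nat"
    and B :: "nat set" and n :: "nat \<Rightarrow> nat \<Rightarrow> nat" and h :: "nat \<Rightarrow> nat"
  assumes is_fsg: "is_fsg (A, m)"
    and hom: "\<And>x y. x \<in> A \<Longrightarrow> y \<in> A \<Longrightarrow> h (m x y) = n (h x) (h y)"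
    and h_into: "\<And>x. x \<in> A \<Longrightarrow> h x \<in> B"
    and assoc_B: "\<And>x y z. x \<in> B \<Longrightarrow> y \<in> B \<Longrightarrow> z \<in> B \<Longrightarrow> n (n x y) z = n x (n y z)"
    and left_normal_B: "\<And>x y z. x \<in> B \<Longrightarrow> y \<in> B \<Longrightarrow> z \<in> B \<Longrightarrow> n (n x y) z = n (n x z) y"
    and fibre_right_zero: "\<And>x y. x \<in> A \<Longrightarrow> y \<in> A \<Longrightarrow> h x = h y \<Longrightarrow> m x y = y"
begin

lemma closed: "x \<in> A \<Longrightarrow> y \<in> A \<Longrightarrow> m x y \<in> A"
  using is_fsg by (auto simp: is_fsg_def)

lemma assoc: "x \<in> A \<Longrightarrow> y \<in> A \<Longrightarrow> z \<in> A \<Longrightarrow> m (m x y) z = m x (m y z)"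
  using is_fsg by (auto simp: is_fsg_def)

lemma idem: "x \<in> A \<Longrightarrow> m x x = x"
  using fibre_right_zero by blast

abbreviation word_prod :: "nat list \<Rightarrow> nat" where
  "word_prod u \<equiv> word_eval m (\<lambda>x. x) u"

lemma word_prod_in: "u \<noteq> [] \<Longrightarrow> set u \<subseteq> A \<Longrightarrow> word_prod u \<in> A"
  using word_eval_closed[of A m u "\<lambda>x. x"] closed by auto

lemma h_word_prod_mult_letter:
  "q \<noteq> [] \<Longrightarrow> set q \<subseteq> A \<Longrightarrow> c \<in> set q \<Longrightarrow> h (m (word_prod q) c) = h (word_prod q)"
proof (induction q rule: list_nonempty_induct)
  case (single x)
  then show ?case by (simp add: idem)
next
  case (cons x q)
  let ?Q = "word_prod q"
  have x: "x \<in> A" and Q: "?Q \<in> A" and c: "c \<in> A"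
    using cons word_prod_in by auto
  have "h (m (m x ?Q) c) = h (m x ?Q)"
  proof (cases "c \<in> set q")
    case True
    then have "h (m (m x ?Q) c) = n (h x) (h (m ?Q c))"
      using x Q c by (simp add: assoc closed hom)
    then show ?thesis
      using cons True x Q by (simp add: hom)
  next
    case False
    then have "c = x"
      using cons.prems by simp
    have "h (m (m x ?Q) x) = n (n (h x) (h x)) (h ?Q)"
      using x Q h_into by (simp add: hom closed left_normal_B)
    also have "\<dots> = h (m x ?Q)"
      using x Q by (simp add: hom idem flip: hom)
    finally show ?thesis
      using \<open>c = x\<close> by simp
  qed
  then show ?case
    using cons.hyps by (simp add: word_eval_Cons)
qed

text \<open>The two products have the same image in the left normal band, and each is a left multiple
  of the other; in a right zero fibre this forces equality.\<close>

lemma word_prod_drop_letter: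
  assumes q: "q \<noteq> []" "set q \<subseteq> A" "a \<in> set q" "z \<in> set q"
  shows "word_prod (a # z # q) = word_prod (a # q)"
proof -
  let ?Q = "word_prod q"
  have Q: "?Q \<in> A" and a: "a \<in> A" and z: "z \<in> A"
    using q word_prod_in by auto
  have hQa: "h (m ?Q a) = h ?Q" and hQz: "h (m ?Q z) = h ?Q"
    using h_word_prod_mult_letter q by auto
  define w1 where "w1 = m a (m z ?Q)"
  define w2 where "w2 = m a ?Q"
  have w1: "w1 \<in> A" and w2: "w2 \<in> A"
    using a z Q by (simp_all add: w1_def w2_def closed)
  have "h w1 = n (h a) (n (h z) (h ?Q))"
    using a z Q by (simp add: w1_def hom closed)
  also have "\<dots> = n (n (h a) (h z)) (h ?Q)"
    using a z Q h_into by (simp add: assoc_B)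
  also have "\<dots> = n (n (h a) (h ?Q)) (h z)"
    using a z Q h_into by (simp add: left_normal_B)
  also have "\<dots> = n (h a) (h (m ?Q z))"
    using a z Q h_into by (simp add: assoc_B hom)
  also have "\<dots> = h w2"
    using a Q hQz by (simp add: w2_def hom)
  finally have "m w2 w1 = w1"
    using fibre_right_zero[OF w2 w1] by simp
  moreover have "m (m (m ?Q a) z) ?Q = ?Q"
    using hQa hQz a z Q by (intro fibre_right_zero) (simp_all add: hom closed)
  then have "m w2 w1 = w2"
    using a z Q by (simp add: w1_def w2_def assoc closed)
  ultimately show ?thesis
    using q by (simp add: word_eval_Cons w1_def w2_def)
qed

lemma word_prod_drop_infix:
  "q \<noteq> [] \<Longrightarrow> set q \<subseteq> A \<Longrightarrow> a \<in> set q \<Longrightarrow> set p \<subseteq> set q \<Longrightarrow>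
    word_prod (a # p @ q) = word_prod (a # q)"
proof (induction p)
  case (Cons z p)
  then have "word_prod (a # z # p @ q) = word_prod (a # p @ q)"
    by (intro word_prod_drop_letter) auto
  then show ?case
    using Cons by simp
qed simp

lemma word_prod_const: "u \<noteq> [] \<Longrightarrow> set u \<subseteq> {y} \<Longrightarrow> y \<in> A \<Longrightarrow> word_prod u = y"
  by (induction u rule: list_nonempty_induct) (auto simp: idem word_eval_Cons)

lemma word_prod_split:
  assumes u: "u = p @ [y] @ r" "r \<noteq> []" "set u \<subseteq> A" "set u = insert y (set r)"
  shows "word_prod u = m (hd u) (m y (word_prod r))"
proof (cases p)
  case Nil
  have "y \<in> A" "word_prod r \<in> A"
    using u word_prod_in by auto
  then show ?thesis
    using Nil u by (simp add: word_eval_Cons idem flip: assoc)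
next
  case (Cons a p1)
  have "word_prod u = word_prod (a # p1 @ (y # r))"
    using u Cons by simp
  also have "\<dots> = word_prod (a # y # r)"
    using u Cons by (intro word_prod_drop_infix) auto
  finally show ?thesis
    using Cons u by (simp add: word_eval_Cons)
qed

lemma word_prod_eq_if_L2bar_equiv:
  "u \<noteq> [] \<Longrightarrow> v \<noteq> [] \<Longrightarrow> set u \<subseteq> A \<Longrightarrow> set v \<subseteq> A \<Longrightarrow> L2bar_equiv u v \<Longrightarrow>
    word_prod u = word_prod v"
proof (induction "card (set u)" arbitrary: u v rule: less_induct)
  case less
  note equiv = \<open>L2bar_equiv u v\<close>
  obtain p y r where u: "u = p @ [y] @ r" "y \<notin> set r" "set u = insert y (set r)"
    using split_at_leftmost_last_occurrence[OF \<open>u \<noteq> []\<close>] by blast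
  obtain p' y' r' where v: "v = p' @ [y'] @ r'" "y' \<notin> set r'" "set v = insert y' (set r')"
    using split_at_leftmost_last_occurrence[OF \<open>v \<noteq> []\<close>] by blast
  have "y' = y"
    using L2bar_equiv_split_letter_eq[OF u v equiv] by simp
  have "set u = set v"
    using L2bar_equiv_set_eq less.prems by blast
  then have set_r: "set r = set r'"
    using u(2,3) v(2,3) \<open>y' = y\<close> by auto
  have y: "y \<in> A" and r: "set r \<subseteq> A" "set r' \<subseteq> A"
    using u v \<open>set u \<subseteq> A\<close> \<open>set v \<subseteq> A\<close> by auto
  show ?case
  proof (cases "r = []")
    case True
    then have "set u \<subseteq> {y}" "set v \<subseteq> {y}"
      using u(3) v(3) set_r \<open>y' = y\<close> by auto
    then show ?thesis
      using word_prod_const y less.prems by metis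
  next
    case False
    then have "r' \<noteq> []"
      using set_r by auto
    have "L2bar_equiv r r'"
      using L2bar_equiv_suffix[of u p y r v p' r'] u v False \<open>r' \<noteq> []\<close> set_r equiv \<open>y' = y\<close>
      by simp
    moreover have "card (set r) < card (set u)"
      using u by simp
    ultimately have "word_prod r = word_prod r'"
      using less.hyps False \<open>r' \<noteq> []\<close> r by blast
    moreover have "hd u = hd v"
      using L2bar_equiv_hd_eq less.prems by blast
    moreover note word_prod_split[OF u(1) False \<open>set u \<subseteq> A\<close> u(3)]
      word_prod_split[OF v(1) \<open>r' \<noteq> []\<close> \<open>set v \<subseteq> A\<close> v(3)]
    ultimately show ?thesis
      using \<open>y' = y\<close> by simp
  qed
qed

lemma mem_pseudovariety:
  assumes W: "pseudovariety W" and L2bar: "L2bar \<in> W"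
  shows "(A, m) \<in> W"
proof (rule pseudovariety_mem_if_identities[OF W _ is_fsg])
  show "({..4}, L2bar_mult) \<in> W"
    using L2bar by (simp add: L2bar_eq)
  fix u v assume words: "u \<noteq> []" "v \<noteq> []" "set u \<subseteq> A" "set v \<subseteq> A"
    and "\<forall>\<sigma>. \<sigma> ` A \<subseteq> {..4} \<longrightarrow> word_eval L2bar_mult \<sigma> u = word_eval L2bar_mult \<sigma> v"
  then have "L2bar_equiv u v"
    unfolding L2bar_equiv_def by (meson image_subsetI rangeI subsetD)
  with words show "word_prod u = word_prod v"
    by (intro word_prod_eq_if_L2bar_equiv)
qed

end

section \<open>Generators of the Mal'cev product\<close>

definition malcev_gens :: "fsg set \<Rightarrow> fsg set \<Rightarrow> fsg set" where
  "malcev_gens V W = {S. is_fsg S \<and> (\<exists>T h. T \<in> W \<and> sg_hom h S T \<and> h ` fst S = fst T \<and>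
      (\<forall>e\<in>fst T. snd T e e = e \<longrightarrow> ({x\<in>fst S. h x = e}, snd S) \<in> V))}"

lemma malcev_eq_pv_gen: "malcev V W = pv_gen (malcev_gens V W)"
  by (simp add: malcev_def malcev_gens_def)

lemma malcev_gens_RZ_LNB_mem:
  assumes W: "pseudovariety W" and L2bar: "L2bar \<in> W" and S: "S \<in> malcev_gens RZ LNB"
  shows "S \<in> W"
proof -
  obtain A m where SA: "S = (A, m)"
    by fastforce
  from S obtain T h where "is_fsg S" "T \<in> LNB" and hom: "sg_hom h S T" and "h ` fst S = fst T"
    and fibres: "\<forall>e\<in>fst T. snd T e e = e \<longrightarrow> ({x\<in>fst S. h x = e}, snd S) \<in> RZ"
    by (auto simp: malcev_gens_def)
  obtain B n where TB: "T = (B, n)"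
    by fastforce
  have "T \<in> left_normal_bands"
    using \<open>T \<in> LNB\<close> LNB_subset_left_normal_bands by blast
  then have "is_fsg (B, n)" "\<forall>x\<in>B. n x x = x"
    "\<forall>x\<in>B. \<forall>y\<in>B. \<forall>z\<in>B. n (n x y) z = n (n x z) y"
    by (auto simp: left_normal_bands_def TB)
  moreover have "\<forall>x\<in>A. \<forall>y\<in>A. h (m x y) = n (h x) (h y)" "\<forall>x\<in>A. h x \<in> B"
    using hom by (auto simp: sg_hom_def SA TB)
  moreover have "m x y = y" if "x \<in> A" "y \<in> A" "h x = h y" for x y
    using fibres that \<open>\<forall>x\<in>B. n x x = x\<close> \<open>\<forall>x\<in>A. h x \<in> B\<close>
    by (force simp: SA TB RZ_def)
  ultimately interpret rz_over_left_normal A m B n h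
    using \<open>is_fsg S\<close> by unfold_locales (auto simp: SA is_fsg_def)
  show ?thesis
    using mem_pseudovariety[OF W L2bar] SA by simp
qed

definition L2_zero_mult :: "nat \<Rightarrow> nat \<Rightarrow> nat" where
  "L2_zero_mult x y = (if x = 2 \<or> y = 2 then 2 else x)"

definition L2_zero :: fsg where
  "L2_zero = ({0, 1, 2}, L2_zero_mult)"

lemma is_fsg_L2_zero: "is_fsg L2_zero"
  by (simp add: L2_zero_def is_fsg_def L2_zero_mult_def)

lemma L2_zero_LNB: "L2_zero \<in> LNB"
  unfolding LNB_def pv_join_def
proof (rule pv_gen_hom_image_prod)
  show "({0, 1}, \<lambda>x y. x) \<in> Sl \<union> LZ" "({0, 1}, min) \<in> Sl \<union> LZ"
    by (auto simp: LZ_def Sl_def is_fsg_def)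
  let ?P = "sg_prod ({0, 1}, \<lambda>x y. x) ({0, 1}, min)"
  let ?g = "\<lambda>u. if snd (prod_decode u) = 1 then fst (prod_decode u) else 2"
  have carrier: "fst ?P = {prod_encode (0, 0), prod_encode (0, 1), prod_encode (1, 0), prod_encode (1, 1)}"
    by (auto simp: sg_prod_pair)
  show "sg_hom ?g ?P L2_zero"
    unfolding sg_hom_iff carrier
    by (simp add: sg_prod_op L2_zero_def L2_zero_mult_def del: sg_prod_def)
  show "?g ` fst ?P = fst L2_zero"
    unfolding carrier by (auto simp: L2_zero_def)
qed (rule is_fsg_L2_zero)

lemma L2bar_malcev_gens: "L2bar \<in> malcev_gens RZ LNB"
proof -
  define g where "g x = (if x \<le> 1 then x else 2 :: nat)" for x
  have "sg_hom g L2bar L2_zero"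
    by (auto simp: sg_hom_def L2bar_eq L2_zero_def g_def L2bar_mult_def L2_zero_mult_def)
  moreover have "{..4::nat} = {0, 1, 2, 3, 4}"
    by auto
  then have "g ` fst L2bar = fst L2_zero"
    by (simp add: L2bar_eq L2_zero_def g_def insert_commute)
  moreover have "({x\<in>fst L2bar. g x = e}, snd L2bar) \<in> RZ" if "e \<in> fst L2_zero" for e
  proof -
    have "{x\<in>fst L2bar. g x = e} \<in> {{0}, {1}, {2, 3, 4}}"
      using that by (auto simp: L2bar_eq L2_zero_def g_def)
    then show ?thesis
      by (elim insertE emptyE) (simp_all add: L2bar_eq RZ_def is_fsg_def L2bar_mult_def)
  qed
  ultimately show ?thesis
    using is_fsg_L2bar L2_zero_LNB unfolding malcev_gens_def by blast
qed

theorem proposition4p12: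
  shows "malcev RZ LNB = pv_gen {L2bar}"
  unfolding malcev_eq_pv_gen
  by (rule pv_gen_eqI) (auto intro: malcev_gens_RZ_LNB_mem L2bar_malcev_gens)

end
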